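(* Let $\mathbb{E}$ be a Boolean algebra and $\mathbb{M}$ a meadow, and consider conditional values in $\mathbb{CV}(\mathbb{E},\mathbb{M})$. Let $X=\sum_{i=1}^n e_i\!:\to v(t_i)$ and $Y=\sum_{j=1}^m f_j\!:\to v(r_j)$ with $e_i,f_j\in\mathbb{E}$ and $t_i,r_j\in\mathbb{M}$. Then $$X\cdot Y=\sum_{i=1}^n\sum_{j=1}^m (e_i\wedge f_j)\!:\to v(t_i\cdot r_j).$$ Moreover, if $X$ and $Y$ are given in nonoverlapping form (i.e. $e_i\wedge e_{i'}=\bot$ for all $i\neq i'$ and $f_j\wedge f_{j'}=\bot$ for all $j\neq j'$), then the displayed expression for $X\cdot Y$ is also nonoverlapping (i.e. $(e_i\wedge f_j)\wedge(e_{i'}\wedge f_{j'})=\bot$ whenever $(i,j)\neq(i',j')$).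
   Context: A meadow is a commutative ring with unit equipped with a total unary inverse ${}^{-1}$ satisfying $(x^{-1})^{-1}=x$ and $x\cdot(x\cdot x^{-1})=x$. Boolean algebras are written $(E,\vee,\wedge,\neg,\top,\bot)$. CV terms are closed terms built from $v(m)$ ($m\in\mathbb{M}$), $-X$, $X^{-1}$, $X+Y$, $X\cdot Y$, and $e\!:\to X$ ($e\in\mathbb{E}$). Fixing a Stone representation $\phi:\mathbb{E}\to W\subseteq\mathcal{P}(S)$ (an isomorphism onto a field of subsets of a set $S$), each CV term $X$ denotes a map $[\![X]\!]:S\to M$ defined pointwise for $v(m)$ (constant $m$), $-,{}^{-1},+,\cdot$, and $[\![e\!:\to X]\!](s)=[\![X]\!](s)$ if $s\in\phi(e)$ and $0$ otherwise. $\mathbb{CV}(\mathbb{E},\mathbb{M})$ is the set of CV terms modulo equality of these maps, and equality of CVs means equality in $\mathbb{CV}(\mathbb{E},\mathbb{M})$. An expression $\sum_{i=1}^n e_i\!:\to v(t_i)$ is called a flat CV expression. *)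

theory Defs
  imports Main
begin

class meadow = comm_ring_1 + inverse +
  assumes meadow_inv_inv: "inverse (inverse x) = x"
  assumes meadow_refl: "x * (x * inverse x) = x"

datatype ('e, 'm) cvterm =
    V 'm
  | Neg "('e, 'm) cvterm"
  | Inv "('e, 'm) cvterm"
  | Plus "('e, 'm) cvterm" "('e, 'm) cvterm"
  | Times "('e, 'm) cvterm" "('e, 'm) cvterm"
  | Cond 'e "('e, 'm) cvterm"

definition stone_rep :: "('e::boolean_algebra \<Rightarrow> 's set) \<Rightarrow> bool" where
  "stone_rep \<phi> \<longleftrightarrow> inj \<phi> \<and>
     (\<forall>x y. \<phi> (sup x y) = \<phi> x \<union> \<phi> y) \<and>
     (\<forall>x y. \<phi> (inf x y) = \<phi> x \<inter> \<phi> y) \<and>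
     (\<forall>x. \<phi> (- x) = - \<phi> x) \<and>
     \<phi> top = UNIV \<and> \<phi> bot = {}"

primrec sem :: "('e \<Rightarrow> 's set) \<Rightarrow> ('e, 'm::meadow) cvterm \<Rightarrow> 's \<Rightarrow> 'm" where
  "sem \<phi> (V c) = (\<lambda>s. c)"
| "sem \<phi> (Neg X) = (\<lambda>s. - sem \<phi> X s)"
| "sem \<phi> (Inv X) = (\<lambda>s. inverse (sem \<phi> X s))"
| "sem \<phi> (Plus X Y) = (\<lambda>s. sem \<phi> X s + sem \<phi> Y s)"
| "sem \<phi> (Times X Y) = (\<lambda>s. sem \<phi> X s * sem \<phi> Y s)"
| "sem \<phi> (Cond e X) = (\<lambda>s. if s \<in> \<phi> e then sem \<phi> X s else 0)"

text \<open>Equality of CVs (equality in CV(E,M) w.r.t. the Stone representation).\<close>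
definition cv_eq :: "('e \<Rightarrow> 's set) \<Rightarrow> ('e, 'm::meadow) cvterm \<Rightarrow> ('e, 'm) cvterm \<Rightarrow> bool" where
  "cv_eq \<phi> X Y \<longleftrightarrow> sem \<phi> X = sem \<phi> Y"

fun cv_sum :: "('e, 'm::meadow) cvterm list \<Rightarrow> ('e, 'm) cvterm" where
  "cv_sum [] = V 0"
| "cv_sum [X] = X"
| "cv_sum (X # Xs) = Plus X (cv_sum Xs)"

definition flat :: "nat \<Rightarrow> (nat \<Rightarrow> 'e) \<Rightarrow> (nat \<Rightarrow> 'm::meadow) \<Rightarrow> ('e, 'm) cvterm" where
  "flat n e t = cv_sum [Cond (e i) (V (t i)). i \<leftarrow> [1..<n+1]]"

end

theory Submission
  imports Defs
begin

text \<open>Pointwise, a flat CV is a finite sum of indicator-weighted constants. Multiplying two such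
  sums out gives a double sum of products of indicators, and the product of the indicators of
  \<open>\<phi> e\<^sub>i\<close> and \<open>\<phi> f\<^sub>j\<close> is the indicator of \<open>\<phi> (e\<^sub>i \<sqinter> f\<^sub>j)\<close> because \<open>\<phi>\<close> preserves meets.
  Nonoverlap of the product is lattice arithmetic: \<open>(e\<^sub>i \<sqinter> f\<^sub>j) \<sqinter> (e\<^sub>i\<^sub>' \<sqinter> f\<^sub>j\<^sub>')\<close> lies below both
  \<open>e\<^sub>i \<sqinter> e\<^sub>i\<^sub>'\<close> and \<open>f\<^sub>j \<sqinter> f\<^sub>j\<^sub>'\<close>, and one of these is \<open>\<bottom>\<close> when \<open>(i, j) \<noteq> (i', j')\<close>.\<close>

lemma sem_cv_sum: "sem \<phi> (cv_sum Xs) s = (\<Sum>X\<leftarrow>Xs. sem \<phi> X s)"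
  by (induction Xs rule: cv_sum.induct) auto

lemma sem_flat: "sem \<phi> (flat n e t) s = (\<Sum>i\<leftarrow>[1..<n+1]. sem \<phi> (Cond (e i) (V (t i))) s)"
  by (simp add: flat_def sem_cv_sum o_def)

lemma sum_list_concat: "sum_list (concat xss) = (\<Sum>xs\<leftarrow>xss. sum_list xs)"
  by (induction xss) auto

lemma sum_list_mult_sum_list:
  fixes a b :: "_ \<Rightarrow> 'a::semiring_0"
  shows "(\<Sum>i\<leftarrow>I. a i) * (\<Sum>j\<leftarrow>J. b j) = sum_list [a i * b j. i \<leftarrow> I, j \<leftarrow> J]"
  by (simp add: sum_list_concat sum_list_mult_const sum_list_const_mult o_def)

lemma stone_rep_inf: "stone_rep \<phi> \<Longrightarrow> \<phi> (inf x y) = \<phi> x \<inter> \<phi> y"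
  by (simp add: stone_rep_def)

lemma sem_Cond_inf_V_mult:
  assumes "stone_rep \<phi>"
  shows "sem \<phi> (Cond (inf a b) (V (x * y))) s =
           sem \<phi> (Cond a (V x)) s * sem \<phi> (Cond b (V y)) s"
  by (simp add: stone_rep_inf[OF assms])

lemma cv_eq_Times_flat:
  assumes "stone_rep \<phi>"
  shows "cv_eq \<phi> (Times (flat n e t) (flat m f r))
           (cv_sum [Cond (inf (e i) (f j)) (V (t i * r j)). i \<leftarrow> [1..<n+1], j \<leftarrow> [1..<m+1]])"
  unfolding cv_eq_def
proof
  fix s
  show "sem \<phi> (Times (flat n e t) (flat m f r)) s =
          sem \<phi> (cv_sum [Cond (inf (e i) (f j)) (V (t i * r j)). i \<leftarrow> [1..<n+1], j \<leftarrow> [1..<m+1]]) s"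
    by (simp only: sem.simps(5) sem_flat sum_list_mult_sum_list sem_cv_sum
          sem_Cond_inf_V_mult[OF assms] map_concat map_map o_def)
qed

lemma inf_inf_eq_bot_if_disjoint:
  fixes a b a' b' :: "'a::bounded_lattice_bot"
  assumes "inf a a' = bot \<or> inf b b' = bot"
  shows "inf (inf a b) (inf a' b') = bot"
proof -
  have "inf (inf a b) (inf a' b') = inf (inf a a') (inf b b')"
    by (simp add: inf_aci)
  with assms show ?thesis
    by auto
qed

lemma pairwise_inf_bot_Times:
  assumes "pairwise (\<lambda>i i'. inf (e i) (e i') = bot) I"
    and "pairwise (\<lambda>j j'. inf (f j) (f j') = bot) J"
  shows "pairwise (\<lambda>(i, j) (i', j'). inf (inf (e i) (f j)) (inf (e i') (f j')) = (bot :: 'a::bounded_lattice_bot)) (I \<times> J)"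
  using assms by (auto simp: pairwise_def intro!: inf_inf_eq_bot_if_disjoint)

theorem mainTheorem2:
  fixes \<phi> :: "'e::boolean_algebra \<Rightarrow> 's set"
    and e f :: "nat \<Rightarrow> 'e" and t r :: "nat \<Rightarrow> 'm::meadow" and n m :: nat
  assumes "stone_rep \<phi>"
  shows "cv_eq \<phi> (Times (flat n e t) (flat m f r))
           (cv_sum [Cond (inf (e i) (f j)) (V (t i * r j)). i \<leftarrow> [1..<n+1], j \<leftarrow> [1..<m+1]]) \<and>
         ((\<forall>i\<in>{1..n}. \<forall>i'\<in>{1..n}. i \<noteq> i' \<longrightarrow> inf (e i) (e i') = bot) \<and>
         (\<forall>j\<in>{1..m}. \<forall>j'\<in>{1..m}. j \<noteq> j' \<longrightarrow> inf (f j) (f j') = bot) \<longrightarrow>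
         (\<forall>i\<in>{1..n}. \<forall>i'\<in>{1..n}. \<forall>j\<in>{1..m}. \<forall>j'\<in>{1..m}. (i, j) \<noteq> (i', j') \<longrightarrow>
            inf (inf (e i) (f j)) (inf (e i') (f j')) = bot))"
proof (intro conjI impI)
  show "cv_eq \<phi> (Times (flat n e t) (flat m f r))
          (cv_sum [Cond (inf (e i) (f j)) (V (t i * r j)). i \<leftarrow> [1..<n+1], j \<leftarrow> [1..<m+1]])"
    using assms by (rule cv_eq_Times_flat)
next
  assume "(\<forall>i\<in>{1..n}. \<forall>i'\<in>{1..n}. i \<noteq> i' \<longrightarrow> inf (e i) (e i') = bot) \<and>
          (\<forall>j\<in>{1..m}. \<forall>j'\<in>{1..m}. j \<noteq> j' \<longrightarrow> inf (f j) (f j') = bot)"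
  then have "pairwise (\<lambda>(i, j) (i', j'). inf (inf (e i) (f j)) (inf (e i') (f j')) = bot)
               ({1..n} \<times> {1..m})"
    by (intro pairwise_inf_bot_Times) (auto simp: pairwise_def)
  then show "\<forall>i\<in>{1..n}. \<forall>i'\<in>{1..n}. \<forall>j\<in>{1..m}. \<forall>j'\<in>{1..m}. (i, j) \<noteq> (i', j') \<longrightarrow>
               inf (inf (e i) (f j)) (inf (e i') (f j')) = bot"
    by (auto simp: pairwise_def)
qed

end
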